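(* Let $B \subset \mathbb{R}^3$ be an open ball and let $\hat{P} \in \mathbb{R}^3 \setminus B$. Then: (i) if $\hat{P}' \in C^+(B,\hat{P})$, then $\mathrm{cl}(C^+(B,\hat{P}')) \subset C^+(B,\hat{P})$; (ii) if $\hat{P}' \in C^+(B,\hat{P})$ and $\eta \in \mathbb{R}^3$ satisfies $\hat{P}' + \eta \in C^+(B,\hat{P}')$, then $\hat{P} + \eta \in C^+(B,\hat{P})$; (iii) if $\hat{P}' \in C^+_0(B,\hat{P})$, then $C^+(B,\hat{P}') \subset C^+(B,\hat{P})$.
   Context: For a bounded convex set $B \subset \mathbb{R}^3$ and a point $Q \in \mathbb{R}^3$ with $Q \notin B$, the positive half-cone $C^+(B,Q)$ is the set of points $Y \in \mathbb{R}^3$ for which there exist $x' \in B$ and $\alpha > 0$ such that $Y - Q = \alpha (Q - x')$, and $C^+_0(B,Q) := C^+(B,Q) \cup \{Q\}$. Here $\mathrm{cl}(S)$ denotes the topological closure of $S$. *)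

theory Defs
  imports "HOL-Analysis.Analysis"
begin

definition pos_half_cone :: "(real^3) set \<Rightarrow> real^3 \<Rightarrow> (real^3) set" where
  "pos_half_cone B Q = {Y. \<exists>x'\<in>B. \<exists>\<alpha>::real. \<alpha> > 0 \<and> Y - Q = \<alpha> *\<^sub>R (Q - x')}"

definition pos_half_cone0 :: "(real^3) set \<Rightarrow> real^3 \<Rightarrow> (real^3) set" where
  "pos_half_cone0 B Q = pos_half_cone B Q \<union> {Q}"

end

theory Submission
  imports Defs
begin

text \<open>Write \<open>P' = P + a (P - x\<^sub>0)\<close> with \<open>x\<^sub>0 \<in> B\<close>. For \<open>\<alpha> > 0\<close>, \<open>\<beta> \<ge> 0\<close> and \<open>y \<in> cl B\<close>
  the vector \<open>\<alpha> (P' - P) + \<beta> (P - y)\<close> equals \<open>g (P - w)\<close> with \<open>g = \<alpha> a + \<beta>\<close> and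
  \<open>w = y - (\<alpha> a / g) (y - x\<^sub>0)\<close>; as \<open>B\<close> is convex and open and the point \<open>x\<^sub>0\<close> of \<open>B\<close> gets positive
  weight, \<open>w \<in> B\<close>. All three claims are instances of this, (i) because \<open>cl C\<^sup>+(B,P')\<close> lies in
  \<open>{P' + b (P' - y) | b \<ge> 0, y \<in> cl B}\<close>, a translate of the conic hull of the compact set
  \<open>P' - cl B\<close>, which is closed because \<open>P' \<notin> cl B\<close>.\<close>

lemma pos_half_cone_iff:
  "Y \<in> pos_half_cone B Q \<longleftrightarrow> (\<exists>x\<in>B. \<exists>\<alpha>>0. Y = Q + \<alpha> *\<^sub>R (Q - x))"
  unfolding pos_half_cone_def by (auto simp: algebra_simps)

lemma pos_half_cone_combination:
  assumes "convex B" "open B" "P' \<in> pos_half_cone B P" "y \<in> closure B" "\<alpha> > 0" "\<beta> \<ge> 0"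
  shows "P + \<alpha> *\<^sub>R (P' - P) + \<beta> *\<^sub>R (P - y) \<in> pos_half_cone B P"
proof -
  obtain x a where x: "x \<in> B" and "a > 0" and P': "P' - P = a *\<^sub>R (P - x)"
    using assms(3) unfolding pos_half_cone_def by blast
  define g where "g = \<alpha> * a + \<beta>"
  define w where "w = y - (\<alpha> * a / g) *\<^sub>R (y - x)"
  have "g > 0" "\<alpha> * a \<le> g"
    using \<open>a > 0\<close> \<open>\<alpha> > 0\<close> \<open>\<beta> \<ge> 0\<close> by (simp_all add: g_def add_pos_nonneg)
  then have "w \<in> interior B"
    unfolding w_def using \<open>a > 0\<close> \<open>\<alpha> > 0\<close> assms(1,2,4) x
    by (intro mem_interior_closure_convex_shrink) (simp_all add: interior_open)
  then have "w \<in> B"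
    using interior_subset by blast
  have "g *\<^sub>R w = g *\<^sub>R y - (\<alpha> * a) *\<^sub>R (y - x)"
    using \<open>g > 0\<close> by (simp add: w_def scaleR_diff_right)
  then have "\<alpha> *\<^sub>R (P' - P) + \<beta> *\<^sub>R (P - y) = g *\<^sub>R (P - w)"
    by (simp add: P' g_def scaleR_diff_right algebra_simps)
  then show ?thesis
    using \<open>w \<in> B\<close> \<open>g > 0\<close> unfolding pos_half_cone_iff by (metis add.assoc)
qed

lemma pos_half_cone_ray_from_closure:
  assumes "convex B" "open B" "P' \<in> pos_half_cone B P" "y \<in> closure B" "b \<ge> 0"
  shows "P' + b *\<^sub>R (P' - y) \<in> pos_half_cone B P"
proof -
  have "P' + b *\<^sub>R (P' - y) = P + (1 + b) *\<^sub>R (P' - P) + b *\<^sub>R (P - y)"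
    by (simp add: algebra_simps)
  then show ?thesis
    using pos_half_cone_combination[OF assms(1-4), of "1 + b" b] \<open>b \<ge> 0\<close> by simp
qed

lemma pos_half_cone_mono:
  assumes "convex B" "open B" "P' \<in> pos_half_cone0 B P"
  shows "pos_half_cone B P' \<subseteq> pos_half_cone B P"
proof (cases "P' = P")
  case False
  then have P': "P' \<in> pos_half_cone B P"
    using assms(3) by (simp add: pos_half_cone0_def)
  show ?thesis
  proof
    fix Y assume "Y \<in> pos_half_cone B P'"
    then obtain x \<alpha> where "x \<in> B" "\<alpha> > 0" "Y = P' + \<alpha> *\<^sub>R (P' - x)"
      unfolding pos_half_cone_iff by blast
    then show "Y \<in> pos_half_cone B P"
      using pos_half_cone_ray_from_closure[OF assms(1,2) P'] closure_subset by force
  qed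
qed simp

lemma pos_half_cone_translate:
  assumes "convex B" "open B" "P' \<in> pos_half_cone B P" "P' + \<eta> \<in> pos_half_cone B P'"
  shows "P + \<eta> \<in> pos_half_cone B P"
proof -
  obtain x \<alpha> where "x \<in> B" "\<alpha> > 0" "\<eta> = \<alpha> *\<^sub>R (P' - x)"
    using assms(4) unfolding pos_half_cone_def by auto
  then have "P + \<eta> = P + \<alpha> *\<^sub>R (P' - P) + \<alpha> *\<^sub>R (P - x)"
    by (simp add: algebra_simps)
  also have "\<dots> \<in> pos_half_cone B P"
    using \<open>x \<in> B\<close> closure_subset \<open>\<alpha> > 0\<close>
    by (intro pos_half_cone_combination[OF assms(1-3)]) auto
  finally show ?thesis .
qed

lemma pos_half_cone_disjoint_closure:
  assumes "convex B" "open B" "P \<notin> B" "P' \<in> pos_half_cone B P"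
  shows "P' \<notin> closure B"
proof
  assume "P' \<in> closure B"
  obtain x a where x: "x \<in> B" and "a > 0" and P': "P' - P = a *\<^sub>R (P - x)"
    using assms(4) unfolding pos_half_cone_def by blast
  have "P' - x = (1 + a) *\<^sub>R (P - x)"
    using P' by (simp add: algebra_simps)
  then have "(a / (1 + a)) *\<^sub>R (P' - x) = P' - P"
    using \<open>a > 0\<close> unfolding P' by (simp add: add_pos_pos)
  then have "P = P' - (a / (1 + a)) *\<^sub>R (P' - x)"
    by simp
  also have "\<dots> \<in> interior B"
    using \<open>a > 0\<close> \<open>P' \<in> closure B\<close> x assms(1,2)
    by (intro mem_interior_closure_convex_shrink) (simp_all add: interior_open)
  finally show False
    using assms(3) interior_subset by blast
qed

lemma closure_pos_half_cone_subset:
  assumes "bounded B" "Q \<notin> closure B"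
  shows "closure (pos_half_cone B Q) \<subseteq> {Q + b *\<^sub>R (Q - y) | b y. b \<ge> 0 \<and> y \<in> closure B}"
proof -
  let ?S = "(\<lambda>y. Q - y) ` closure B"
  have "closed (conic hull ?S)"
    using assms by (intro closed_conic_hull disjI2 conjI compact_continuous_image
        continuous_intros compact_closure[THEN iffD2]) auto
  moreover have "{Q + b *\<^sub>R (Q - y) | b y. b \<ge> 0 \<and> y \<in> closure B} = (+) Q ` (conic hull ?S)"
    unfolding conic_hull_explicit by blast
  ultimately have "closed {Q + b *\<^sub>R (Q - y) | b y. b \<ge> 0 \<and> y \<in> closure B}"
    by (simp add: closed_translation)
  moreover have "pos_half_cone B Q \<subseteq> {Q + b *\<^sub>R (Q - y) | b y. b \<ge> 0 \<and> y \<in> closure B}"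
    unfolding pos_half_cone_def using closure_subset by (fastforce simp: algebra_simps)
  ultimately show ?thesis
    by (rule closure_minimal[rotated])
qed

lemma closure_pos_half_cone_subset_pos_half_cone:
  assumes "convex B" "open B" "bounded B" "P \<notin> B" "P' \<in> pos_half_cone B P"
  shows "closure (pos_half_cone B P') \<subseteq> pos_half_cone B P"
  using closure_pos_half_cone_subset[OF assms(3) pos_half_cone_disjoint_closure[OF assms(1,2,4,5)]]
    pos_half_cone_ray_from_closure[OF assms(1,2,5)] by blast

theorem proposition2:
  fixes c P :: "real^3" and r :: real
  assumes "r > 0" and "P \<notin> ball c r"
  shows "(\<forall>P'. P' \<in> pos_half_cone (ball c r) P \<longrightarrow>
            closure (pos_half_cone (ball c r) P') \<subseteq> pos_half_cone (ball c r) P)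
       \<and> (\<forall>P' \<eta>. P' \<in> pos_half_cone (ball c r) P \<and> P' + \<eta> \<in> pos_half_cone (ball c r) P' \<longrightarrow>
            P + \<eta> \<in> pos_half_cone (ball c r) P)
       \<and> (\<forall>P'. P' \<in> pos_half_cone0 (ball c r) P \<longrightarrow>
            pos_half_cone (ball c r) P' \<subseteq> pos_half_cone (ball c r) P)"
  using closure_pos_half_cone_subset_pos_half_cone[OF convex_ball open_ball bounded_ball assms(2)]
    pos_half_cone_translate[OF convex_ball open_ball]
    pos_half_cone_mono[OF convex_ball open_ball]
  by blast

end
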